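(* In the setting below, suppose $M$ has constant sectional curvature $K$. A natural SU(2)-structure on $\mathcal S$ with $\tilde\theta=-2\theta$ and $\omega_1=d\theta$ is nearly-hypo if and only if there are real numbers $b_0,b_1,b_2$ with $$b_1^2-b_0b_2=1,\qquad (b_0+s^2Kb_2)^2+4s^2K=36s^4,\qquad K>-\frac{b_0^2}{s^2(1+b_1^2)},$$ such that $$\omega_2=b_0\alpha_0+b_1\alpha_1+b_2\alpha_2,\qquad \omega_3=\frac{Kb_1}{3}\alpha_0+\frac{s^2Kb_2-b_0}{6s^2}\alpha_1-\frac{b_1}{3s^2}\alpha_2 ;$$ and conversely every such triple $(b_0,b_1,b_2)$ gives a natural SU(2)-structure of this form. Every such nearly-hypo structure is also contact-hypo, hence double-hypo. Such a structure is compatible with the canonical metric if and only if either (i) $b_2=-b_0$, $b_1\neq0$, $b_0^2+b_1^2=1$ and $K=3=s^{-2}$; or (ii) $b_2=-b_0=\pm1$, $b_1=0$ and $s^2K+1=6s^2$.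
   Context: Let $(M,g)$ be a connected oriented Riemannian 3-manifold, $s>0$, and $\mathcal S=\{u\in TM:\|u\|=s\}$ the total space of the radius-$s$ tangent sphere bundle with the canonical metric (induced by the Sasaki metric). An adapted frame at $u\in\mathcal S$: take a positively oriented orthonormal frame $(f_0=u/s,f_1,f_2)$ of $T_{\pi(u)}M$ and set $e_0=f_0^h,e_1=f_1^h,e_2=f_2^h,e_3=f_1^v,e_4=f_2^v$ (horizontal and vertical lifts); dual coframe $e^0,\dots,e^4$, $e^{ij}=e^i\wedge e^j$. Globally defined forms: $\theta=s\,e^0$, $\alpha_0=e^{12}$, $\alpha_1=e^{14}-e^{23}$, $\alpha_2=e^{34}$, $d\theta=e^{31}+e^{42}$; $\alpha_i\wedge d\theta=0$, $\alpha_0\wedge\alpha_1=\alpha_2\wedge\alpha_1=0$, $\alpha_0\wedge\alpha_2=-\frac12\alpha_1\wedge\alpha_1=-\frac12 d\theta\wedge d\theta=e^{1234}$. For constant sectional curvature $K$: $d\alpha_0=s^{-2}\theta\wedge\alpha_1$, $d\alpha_1=2s^{-2}\theta\wedge\alpha_2-2K\theta\wedge\alpha_0$, $d\alpha_2=-K\theta\wedge\alpha_1$. An SU(2)-structure: $(\tilde\theta,\omega_1,\omega_2,\omega_3)$ with (C1) $\tilde\theta\wedge\omega_1\wedge\omega_1\neq0$, $\omega_i\wedge\omega_j=0$ ($i\ne j$), $\omega_1\wedge\omega_1=\omega_2\wedge\omega_2=\omega_3\wedge\omega_3=2v$, $v$ nowhere zero; (C2) $x\lrcorner\omega_1=y\lrcorner\omega_2\Rightarrow\omega_3(x,y)\ge0$.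 Metric on $\ker\tilde\theta$: $g_{SU(2)}$ with $x\lrcorner\omega_1\wedge y\lrcorner\omega_2\wedge\omega_3=g_{SU(2)}(x,y)\,v$. Hypo: $d\omega_1=0$, $d(\tilde\theta\wedge\omega_2)=d(\tilde\theta\wedge\omega_3)=0$. Nearly-hypo: $d\omega_2=3\tilde\theta\wedge\omega_3$, $d(\tilde\theta\wedge\omega_1)=-2\omega_1\wedge\omega_1$. Double-hypo: hypo and nearly-hypo. Contact-hypo: $d\tilde\theta=-2\omega_1$, $d(\tilde\theta\wedge\omega_2)=d(\tilde\theta\wedge\omega_3)=0$. Natural SU(2)-structure on $\mathcal S$: $\tilde\theta=-2p\theta$ ($p\ne0$ constant), each $\omega_i$ a constant-coefficient combination of $\alpha_0,\alpha_1,\alpha_2,d\theta$. Compatible with the canonical metric: $g_{SU(2)}$ equals the canonical metric on $\ker\theta$. *)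

theory Defs
  imports Complex_Main
begin

text \<open>Pointwise (fibrewise) model of the exterior algebra of the 5-dimensional tangent
space of the tangent sphere bundle, in the adapted coframe e^0,...,e^4.
A form is given by its coefficients: the coefficient of e^{i_1 ... i_k} (i_1 < ... < i_k)
is the value at the set {i_1,...,i_k}; only subsets of {0..<5} are relevant.
Tangent vectors are given by their components x 0, ..., x 4 w.r.t. e_0,...,e_4.\<close>

type_synonym form = "nat set \<Rightarrow> real"
type_synonym tvec = "nat \<Rightarrow> real"

definition fzero :: form where "fzero = (\<lambda>I. 0)"
definition fadd :: "form \<Rightarrow> form \<Rightarrow> form" where "fadd a b = (\<lambda>I. a I + b I)"
definition fsub :: "form \<Rightarrow> form \<Rightarrow> form" where "fsub a b = (\<lambda>I. a I - b I)"
definition sc :: "real \<Rightarrow> form \<Rightarrow> form" where "sc c a = (\<lambda>I. c * a I)"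

text \<open>Shuffle sign: e^J \<and> e^L = shsgn J L * e^(J \<union> L) for disjoint J, L.\<close>
definition shsgn :: "nat set \<Rightarrow> nat set \<Rightarrow> real" where
  "shsgn J L = (-1) ^ card {(j, l). j \<in> J \<and> l \<in> L \<and> l < j}"

definition wedge :: "form \<Rightarrow> form \<Rightarrow> form" where
  "wedge a b = (\<lambda>I. if I \<subseteq> {0..<5}
      then (\<Sum>J\<in>Pow I. shsgn J (I - J) * a J * b (I - J)) else 0)"

definition interior :: "tvec \<Rightarrow> form \<Rightarrow> form" where
  "interior x \<omega> = (\<lambda>I. if I \<subseteq> {0..<5}
      then (\<Sum>i\<in>{0..<5} - I. shsgn {i} I * x i * \<omega> (insert i I)) else 0)"

definition eval1 :: "form \<Rightarrow> tvec \<Rightarrow> real" where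
  "eval1 \<beta> x = interior x \<beta> {}"
definition eval2 :: "form \<Rightarrow> tvec \<Rightarrow> tvec \<Rightarrow> real" where
  "eval2 \<omega> x y = interior y (interior x \<omega>) {}"

text \<open>Canonical metric: the adapted frame e_0,...,e_4 is orthonormal.\<close>
definition can_metric :: "tvec \<Rightarrow> tvec \<Rightarrow> real" where
  "can_metric x y = (\<Sum>i<5. x i * y i)"

definition eb :: "nat \<Rightarrow> form" where "eb i = (\<lambda>I. if I = {i} then 1 else 0)"

definition theta :: "real \<Rightarrow> form" where "theta s = sc s (eb 0)"
definition alpha0 :: form where "alpha0 = wedge (eb 1) (eb 2)"
definition alpha1 :: form where "alpha1 = fsub (wedge (eb 1) (eb 4)) (wedge (eb 2) (eb 3))"
definition alpha2 :: form where "alpha2 = wedge (eb 3) (eb 4)"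
definition dtheta :: form where "dtheta = fadd (wedge (eb 3) (eb 1)) (wedge (eb 4) (eb 2))"

type_synonym coeffs = "real \<times> real \<times> real \<times> real"

definition nat2 :: "coeffs \<Rightarrow> form" where
  "nat2 c = (case c of (c0, c1, c2, c3) \<Rightarrow>
     fadd (fadd (sc c0 alpha0) (sc c1 alpha1)) (fadd (sc c2 alpha2) (sc c3 dtheta)))"

text \<open>Exterior derivative of such a combination, for constant sectional curvature K
(structure equations; d(d theta) = 0).\<close>
definition dnat2 :: "real \<Rightarrow> real \<Rightarrow> coeffs \<Rightarrow> form" where
  "dnat2 s K c = (case c of (c0, c1, c2, c3) \<Rightarrow>
     fadd (fadd (sc (c0 / s\<^sup>2) (wedge (theta s) alpha1))
                (sc c1 (fsub (sc (2 / s\<^sup>2) (wedge (theta s) alpha2)) (sc (2 * K) (wedge (theta s) alpha0)))))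
          (sc (- c2 * K) (wedge (theta s) alpha1)))"

definition ttheta :: "real \<Rightarrow> real \<Rightarrow> form" where "ttheta s p = sc (-2 * p) (theta s)"
definition dttheta :: "real \<Rightarrow> form" where "dttheta p = sc (-2 * p) dtheta"

text \<open>d(tilde theta \<and> omega) = d tilde theta \<and> omega - tilde theta \<and> d omega.\<close>
definition dtw :: "real \<Rightarrow> real \<Rightarrow> real \<Rightarrow> coeffs \<Rightarrow> form" where
  "dtw s K p c = fsub (wedge (dttheta p) (nat2 c)) (wedge (ttheta s p) (dnat2 s K c))"

definition su2 :: "form \<Rightarrow> form \<Rightarrow> form \<Rightarrow> form \<Rightarrow> bool" where
  "su2 tt w1 w2 w3 \<longleftrightarrow>
     wedge tt (wedge w1 w1) \<noteq> fzero \<and>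
     wedge w1 w2 = fzero \<and> wedge w2 w1 = fzero \<and>
     wedge w1 w3 = fzero \<and> wedge w3 w1 = fzero \<and>
     wedge w2 w3 = fzero \<and> wedge w3 w2 = fzero \<and>
     wedge w1 w1 = wedge w2 w2 \<and> wedge w2 w2 = wedge w3 w3 \<and>
     sc (1/2) (wedge w1 w1) \<noteq> fzero \<and>
     (\<forall>x y. interior x w1 = interior y w2 \<longrightarrow> eval2 w3 x y \<ge> 0)"

definition nat_su2 :: "real \<Rightarrow> real \<Rightarrow> coeffs \<Rightarrow> coeffs \<Rightarrow> coeffs \<Rightarrow> bool" where
  "nat_su2 s p a b c \<longleftrightarrow> p \<noteq> 0 \<and> su2 (ttheta s p) (nat2 a) (nat2 b) (nat2 c)"

definition hypo :: "real \<Rightarrow> real \<Rightarrow> real \<Rightarrow> coeffs \<Rightarrow> coeffs \<Rightarrow> coeffs \<Rightarrow> bool" where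
  "hypo s K p a b c \<longleftrightarrow> dnat2 s K a = fzero \<and> dtw s K p b = fzero \<and> dtw s K p c = fzero"

definition nearly_hypo :: "real \<Rightarrow> real \<Rightarrow> real \<Rightarrow> coeffs \<Rightarrow> coeffs \<Rightarrow> coeffs \<Rightarrow> bool" where
  "nearly_hypo s K p a b c \<longleftrightarrow>
     dnat2 s K b = sc 3 (wedge (ttheta s p) (nat2 c)) \<and>
     dtw s K p a = sc (-2) (wedge (nat2 a) (nat2 a))"

definition double_hypo :: "real \<Rightarrow> real \<Rightarrow> real \<Rightarrow> coeffs \<Rightarrow> coeffs \<Rightarrow> coeffs \<Rightarrow> bool" where
  "double_hypo s K p a b c \<longleftrightarrow> hypo s K p a b c \<and> nearly_hypo s K p a b c"

definition contact_hypo :: "real \<Rightarrow> real \<Rightarrow> real \<Rightarrow> coeffs \<Rightarrow> coeffs \<Rightarrow> coeffs \<Rightarrow> bool" where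
  "contact_hypo s K p a b c \<longleftrightarrow>
     dttheta p = sc (-2) (nat2 a) \<and> dtw s K p b = fzero \<and> dtw s K p c = fzero"

text \<open>Compatibility: g_SU(2) equals the canonical metric on ker tilde theta, where
x \<lrcorner> w1 \<and> y \<lrcorner> w2 \<and> w3 = g_SU(2)(x,y) v and v = w1 \<and> w1 / 2.\<close>
definition compatible :: "real \<Rightarrow> real \<Rightarrow> coeffs \<Rightarrow> coeffs \<Rightarrow> coeffs \<Rightarrow> bool" where
  "compatible s p a b c \<longleftrightarrow>
     (\<forall>x y. eval1 (ttheta s p) x = 0 \<and> eval1 (ttheta s p) y = 0 \<longrightarrow>
        wedge (wedge (interior x (nat2 a)) (interior y (nat2 b))) (nat2 c)
          = sc (can_metric x y) (sc (1/2) (wedge (nat2 a) (nat2 a))))"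

end

theory Submission
  imports Defs
begin

text \<open>All forms involved have constant coefficients in the adapted coframe, so every condition is
polynomial in the coefficients. Write omega2 = b0 alpha0 + b1 alpha1 + b2 alpha2 and
omega3 = c0 alpha0 + c1 alpha1 + c2 alpha2 (a d theta component is excluded by (C1)). With
omega1 = d theta, the algebraic part of (C1) says b1^2 - b0 b2 = c1^2 - c0 c2 = 1 and
b0 c2 + b2 c0 - 2 b1 c1 = 0, while (C2) says that the binary quadratic form
(c0 b1 - c1 b0) p^2 + (c0 b2 - c2 b0) p q + (c1 b2 - c2 b1) q^2 is positive semidefinite. By a
Lagrange-type identity its discriminant equals -4 under (C1), so (C2) becomes c0 b1 - c1 b0 > 0.
The structure equations make d omega2 = 3 tilde-theta wedge omega3 an explicit formula for omega3
in terms of omega2, and substituting it turns these conditions into the three stated ones. The hypo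
equations come for free, since every d alpha_i is a multiple of theta and d theta wedge alpha_i = 0.
Compatibility says that g_SU(2) has the identity Gram matrix on e_1, ..., e_4, i.e.
c0 b1 - c1 b0 = c1 b2 - c2 b1 = 1 and c1 b1 = c0 b2, which under the constraints leaves exactly
the two listed cases.\<close>

lemma binary_form_nonneg_iff:
  fixes A B C :: real
  assumes "B\<^sup>2 < 4 * A * C"
  shows "(\<forall>p q. 0 \<le> A * p\<^sup>2 + B * p * q + C * q\<^sup>2) \<longleftrightarrow> 0 < A"
proof
  assume nonneg: "\<forall>p q. 0 \<le> A * p\<^sup>2 + B * p * q + C * q\<^sup>2"
  have "0 \<le> A"
    using nonneg[rule_format, of 1 0] by simp
  moreover have "A \<noteq> 0"
    using assms by auto
  ultimately show "0 < A"
    by simp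
next
  assume "0 < A"
  show "\<forall>p q. 0 \<le> A * p\<^sup>2 + B * p * q + C * q\<^sup>2"
  proof (intro allI)
    fix p q :: real
    have "4 * A * (A * p\<^sup>2 + B * p * q + C * q\<^sup>2) = (2 * A * p + B * q)\<^sup>2 + (4 * A * C - B\<^sup>2) * q\<^sup>2"
      by (simp add: power2_eq_square algebra_simps)
    also have "\<dots> \<ge> 0"
      using assms by simp
    finally show "0 \<le> A * p\<^sup>2 + B * p * q + C * q\<^sup>2"
      using \<open>0 < A\<close> by (simp add: zero_le_mult_iff)
  qed
qed

section \<open>Forms with finitely many nonzero coefficients\<close>

text \<open>A list of monomials (J, c) stands for the form with coefficient c on e^J, repeated J being
added up. Pushing wedge and interior products into such lists reduces every identity between forms
to finitely many coefficient identities (lincomb_eq_iff).\<close>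

fun lincomb :: "(nat set \<times> real) list \<Rightarrow> form" where
  "lincomb [] I = 0"
| "lincomb ((J, c) # xs) I = (if I = J then c else 0) + lincomb xs I"

(* Otherwise simp expands concrete lists into lambda terms before the list-level rules can fire. *)
declare lincomb.simps [simp del]

lemma fzero_eq_lincomb_Nil: "fzero = lincomb []"
  by (auto simp: fzero_def lincomb.simps)

lemma lincomb_append: "lincomb (xs @ ys) I = lincomb xs I + lincomb ys I"
  by (induction xs I rule: lincomb.induct) (auto simp: lincomb.simps)

lemma lincomb_concat: "lincomb (concat (map f l)) I = (\<Sum>i\<leftarrow>l. lincomb (f i) I)"
  by (induction l) (auto simp: lincomb_append lincomb.simps)

lemma lincomb_Cons: "lincomb (m # xs) = fadd (lincomb [m]) (lincomb xs)"
  by (cases m) (auto simp: fadd_def lincomb.simps)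

lemma fadd_lincomb: "fadd (lincomb xs) (lincomb ys) = lincomb (xs @ ys)"
  by (auto simp: fadd_def lincomb_append)

lemma sc_lincomb: "sc k (lincomb xs) = lincomb (map (\<lambda>(J, c). (J, k * c)) xs)"
proof -
  have "k * lincomb xs I = lincomb (map (\<lambda>(J, c). (J, k * c)) xs) I" for I
    by (induction xs I rule: lincomb.induct) (auto simp: lincomb.simps algebra_simps)
  then show ?thesis by (auto simp: sc_def)
qed

lemma fsub_lincomb: "fsub (lincomb xs) (lincomb ys) = lincomb (xs @ map (\<lambda>(J, c). (J, - c)) ys)"
proof -
  have "fsub (lincomb xs) (lincomb ys) = fadd (lincomb xs) (sc (-1) (lincomb ys))"
    by (auto simp: fsub_def fadd_def sc_def)
  then show ?thesis by (simp add: sc_lincomb fadd_lincomb)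
qed

lemma eb_eq_lincomb: "eb i = lincomb [({i}, 1)]"
  by (auto simp: eb_def lincomb.simps)

lemma lincomb_eq_0: "I \<notin> fst ` set xs \<Longrightarrow> lincomb xs I = 0"
  by (induction xs I rule: lincomb.induct) (auto simp: lincomb.simps)

lemma lincomb_eq_iff:
  "lincomb xs = lincomb ys \<longleftrightarrow> (\<forall>I\<in>set (map fst (xs @ ys)). lincomb xs I = lincomb ys I)"
proof
  assume coeffs: "\<forall>I\<in>set (map fst (xs @ ys)). lincomb xs I = lincomb ys I"
  show "lincomb xs = lincomb ys"
  proof
    fix I
    show "lincomb xs I = lincomb ys I"
      using coeffs lincomb_eq_0[of I xs] lincomb_eq_0[of I ys]
      by (cases "I \<in> fst ` set (xs @ ys)") (auto simp: image_Un)
  qed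
qed auto

lemma lincomb_single_eq_iff: "lincomb [(S, u)] = lincomb [(S, v)] \<longleftrightarrow> u = v"
  by (subst lincomb_eq_iff) (simp add: lincomb.simps)

lemma lincomb_single_eq_fzero_iff: "lincomb [(S, u)] = fzero \<longleftrightarrow> u = 0"
  by (subst fzero_eq_lincomb_Nil, subst lincomb_eq_iff) (simp add: lincomb.simps)

definition count_less :: "nat set \<Rightarrow> nat \<Rightarrow> nat" where
  "count_less L a = card {l\<in>L. l < a}"

lemma count_less_empty [simp]: "count_less {} a = 0"
  by (simp add: count_less_def)

lemma count_less_insert [simp]:
  assumes "finite L" "b \<notin> L"
  shows "count_less (insert b L) a = (if b < a then 1 else 0) + count_less L a"
proof -
  have "{l\<in>insert b L. l < a} = (if b < a then insert b {l\<in>L. l < a} else {l\<in>L. l < a})"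
    by auto
  then show ?thesis
    using assms by (simp add: count_less_def)
qed

lemma shsgn_empty [simp]: "shsgn {} L = 1"
  by (simp add: shsgn_def)

lemma shsgn_insert [simp]:
  assumes "finite J" "finite L" "a \<notin> J"
  shows "shsgn (insert a J) L = (-1) ^ count_less L a * shsgn J L"
proof -
  let ?inv = "\<lambda>J. {(j, l). j \<in> J \<and> l \<in> L \<and> l < j}"
  have split: "?inv (insert a J) = ({a} \<times> {l\<in>L. l < a}) \<union> ?inv J"
    by auto
  have "finite (?inv J)"
    by (rule finite_subset[of _ "J \<times> L"]) (use assms in auto)
  then have "card (?inv (insert a J)) = count_less L a + card (?inv J)"
    unfolding split count_less_def using assms
    by (subst card_Un_disjoint) (auto simp: card_cartesian_product)
  then show ?thesis
    by (simp add: shsgn_def power_add)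
qed

lemma wedge_fadd_left: "wedge (fadd a a') b = fadd (wedge a b) (wedge a' b)"
  by (rule ext) (simp add: wedge_def fadd_def algebra_simps sum.distrib)

lemma wedge_fadd_right: "wedge a (fadd b b') = fadd (wedge a b) (wedge a b')"
  by (rule ext) (simp add: wedge_def fadd_def algebra_simps sum.distrib)

lemma wedge_fzero_left: "wedge fzero b = fzero"
  by (rule ext) (simp add: wedge_def fzero_def)

lemma wedge_fzero_right: "wedge a fzero = fzero"
  by (rule ext) (simp add: wedge_def fzero_def)

definition wedge_monomial :: "nat set \<Rightarrow> real \<Rightarrow> nat set \<Rightarrow> real \<Rightarrow> (nat set \<times> real) list" where
  "wedge_monomial J c L d =
     (if J \<inter> L = {} \<and> J \<union> L \<subseteq> {0..<5} then [(J \<union> L, shsgn J L * c * d)] else [])"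

definition wedge_list :: "(nat set \<times> real) list \<Rightarrow> (nat set \<times> real) list \<Rightarrow> (nat set \<times> real) list" where
  "wedge_list xs ys = concat (map (\<lambda>(J, c). concat (map (\<lambda>(L, d). wedge_monomial J c L d) ys)) xs)"

lemma wedge_monomials: "wedge (lincomb [(J, c)]) (lincomb [(L, d)]) = lincomb (wedge_monomial J c L d)"
proof
  fix I
  have "wedge (lincomb [(J, c)]) (lincomb [(L, d)]) I = (if I \<subseteq> {0..<5} then
     (\<Sum>M\<in>Pow I. if M = J then (if I - M = L then shsgn M (I - M) * c * d else 0) else 0) else 0)"
    by (auto simp: wedge_def lincomb.simps intro!: sum.cong)
  also have "\<dots> = (if I \<subseteq> {0..<5} \<and> J \<subseteq> I \<and> I - J = L then shsgn J L * c * d else 0)"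
    using finite_subset[of I "{0..<5}"] by (auto simp: sum.delta)
  also have "\<dots> = lincomb (wedge_monomial J c L d) I"
    by (auto simp: wedge_monomial_def lincomb.simps)
  finally show "wedge (lincomb [(J, c)]) (lincomb [(L, d)]) I = lincomb (wedge_monomial J c L d) I" .
qed

lemma wedge_lincomb: "wedge (lincomb xs) (lincomb ys) = lincomb (wedge_list xs ys)"
proof (induction xs)
  case Nil
  then show ?case by (simp add: wedge_list_def fzero_eq_lincomb_Nil[symmetric] wedge_fzero_left)
next
  case (Cons x xs)
  obtain J c where x: "x = (J, c)" by force
  have "wedge (lincomb [(J, c)]) (lincomb ys) = lincomb (wedge_list [(J, c)] ys)"
  proof (induction ys)
    case Nil
    then show ?case by (simp add: wedge_list_def fzero_eq_lincomb_Nil[symmetric] wedge_fzero_right)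
  next
    case (Cons y ys)
    obtain L d where y: "y = (L, d)" by force
    show ?case
      unfolding y lincomb_Cons[of "(L, d)" ys] wedge_fadd_right wedge_monomials
      using Cons.IH by (simp add: fadd_lincomb wedge_list_def)
  qed
  then show ?case
    unfolding x lincomb_Cons[of "(J, c)" xs] wedge_fadd_left Cons.IH
    by (simp add: fadd_lincomb wedge_list_def)
qed

lemma interior_fadd: "interior x (fadd a b) = fadd (interior x a) (interior x b)"
  by (rule ext) (simp add: interior_def fadd_def algebra_simps sum.distrib)

lemma interior_fzero: "interior x fzero = fzero"
  by (rule ext) (simp add: interior_def fzero_def)

definition interior_monomial :: "tvec \<Rightarrow> nat set \<Rightarrow> real \<Rightarrow> nat \<Rightarrow> (nat set \<times> real) list" where
  "interior_monomial x J c i =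
     (if i \<in> J \<and> J \<subseteq> {0..<5} then [(J - {i}, shsgn {i} (J - {i}) * x i * c)] else [])"

definition interior_list :: "tvec \<Rightarrow> (nat set \<times> real) list \<Rightarrow> (nat set \<times> real) list" where
  "interior_list x xs = concat (map (\<lambda>(J, c). concat (map (interior_monomial x J c) [0..<5])) xs)"

lemma interior_monomial_sum:
  "interior x (lincomb [(J, c)]) = lincomb (concat (map (interior_monomial x J c) [0..<5]))"
proof
  fix I
  let ?t = "\<lambda>i. if i \<in> J \<and> J \<subseteq> {0..<5} \<and> I = J - {i} then shsgn {i} (J - {i}) * x i * c else 0"
  have "lincomb (concat (map (interior_monomial x J c) [0..<5])) I = (\<Sum>i\<in>{0..<5}. ?t i)"
    by (auto simp: lincomb_concat interv_sum_list_conv_sum_set_nat interior_monomial_def lincomb.simps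
        intro!: sum.cong)
  also have "\<dots> = interior x (lincomb [(J, c)]) I"
  proof (cases "I \<subseteq> {0..<5}")
    case True
    then have "(\<Sum>i\<in>{0..<5}. ?t i) = (\<Sum>i\<in>{0..<5} - I. ?t i)"
      by (intro sum.mono_neutral_right) auto
    also have "\<dots> = (\<Sum>i\<in>{0..<5} - I. shsgn {i} I * x i * (if insert i I = J then c else 0))"
      using True by (intro sum.cong) auto
    finally show ?thesis using True by (simp add: interior_def lincomb.simps)
  next
    case False
    then show ?thesis by (auto simp: interior_def subset_iff intro!: sum.neutral)
  qed
  finally show "interior x (lincomb [(J, c)]) I = lincomb (concat (map (interior_monomial x J c) [0..<5])) I" ..
qed

lemma interior_lincomb: "interior x (lincomb xs) = lincomb (interior_list x xs)"
proof (induction xs)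
  case Nil
  then show ?case by (simp add: interior_list_def fzero_eq_lincomb_Nil[symmetric] interior_fzero)
next
  case (Cons y xs)
  obtain J c where y: "y = (J, c)" by force
  show ?case
    unfolding y lincomb_Cons[of "(J, c)" xs] interior_fadd Cons.IH interior_monomial_sum
    by (simp add: interior_list_def fadd_lincomb)
qed

lemma upt_0_5: "[0..<5] = [0::nat, 1, 2, 3, 4]"
  by (simp add: upt_rec)

section \<open>The global forms in the adapted coframe\<close>

lemma nat2_eq_lincomb:
  "nat2 (c0, c1, c2, c3) =
     lincomb [({1,2}, c0), ({1,4}, c1), ({2,3}, -c1), ({3,4}, c2), ({1,3}, -c3), ({2,4}, -c3)]"
  unfolding nat2_def alpha0_def alpha1_def alpha2_def dtheta_def eb_eq_lincomb
    wedge_lincomb fsub_lincomb sc_lincomb fadd_lincomb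
  by (simp add: wedge_list_def wedge_monomial_def, subst lincomb_eq_iff,
      simp add: lincomb.simps set_eq_subset)

lemma theta_eq_lincomb: "theta s = lincomb [({0}, s)]"
  unfolding theta_def eb_eq_lincomb sc_lincomb by simp

lemma ttheta_eq_lincomb: "ttheta s p = lincomb [({0}, -2 * p * s)]"
  unfolding ttheta_def theta_eq_lincomb sc_lincomb by simp

lemma dttheta_eq_sc_nat2: "dttheta p = sc (-2 * p) (nat2 (0, 0, 0, 1))"
  unfolding dttheta_def nat2_def sc_def fadd_def by simp

lemma wedge_nat2_nat2:
  "wedge (nat2 (b0, b1, b2, b3)) (nat2 (c0, c1, c2, c3)) =
     lincomb [({1,2,3,4}, b0 * c2 + b2 * c0 - 2 * b1 * c1 - 2 * b3 * c3)]"
  unfolding nat2_eq_lincomb wedge_lincomb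
  by (simp add: wedge_list_def wedge_monomial_def, subst lincomb_eq_iff,
      simp add: lincomb.simps set_eq_subset)

lemma dnat2_eq_lincomb:
  "dnat2 s K (c0, c1, c2, c3) =
     lincomb [({0,1,4}, s * (c0 / s\<^sup>2 - c2 * K)), ({0,2,3}, - s * (c0 / s\<^sup>2 - c2 * K)),
              ({0,3,4}, 2 * c1 * s / s\<^sup>2), ({0,1,2}, -2 * K * c1 * s)]"
  unfolding dnat2_def theta_eq_lincomb alpha0_def alpha1_def alpha2_def eb_eq_lincomb
    wedge_lincomb fsub_lincomb sc_lincomb fadd_lincomb
  by (simp add: wedge_list_def wedge_monomial_def, subst lincomb_eq_iff,
      simp add: lincomb.simps set_eq_subset algebra_simps)

lemma wedge_ttheta_nat2:
  "wedge (ttheta s p) (nat2 (c0, c1, c2, c3)) =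
     lincomb [({0,1,2}, -2 * p * s * c0), ({0,1,4}, -2 * p * s * c1), ({0,2,3}, 2 * p * s * c1),
              ({0,3,4}, -2 * p * s * c2), ({0,1,3}, 2 * p * s * c3), ({0,2,4}, 2 * p * s * c3)]"
  unfolding ttheta_eq_lincomb nat2_eq_lincomb wedge_lincomb
  by (simp add: wedge_list_def wedge_monomial_def, subst lincomb_eq_iff,
      simp add: lincomb.simps set_eq_subset)

lemma wedge_ttheta_top:
  "wedge (ttheta s p) (lincomb [({1,2,3,4}, u)]) = lincomb [({0,1,2,3,4}, -2 * p * s * u)]"
  unfolding ttheta_eq_lincomb wedge_lincomb
  by (simp add: wedge_list_def wedge_monomial_def, subst lincomb_eq_iff,
      simp add: lincomb.simps set_eq_subset)

lemma interior_nat2: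
  "interior x (nat2 (c0, c1, c2, c3)) =
     lincomb [({1}, - c0 * x 2 - c1 * x 4 + c3 * x 3), ({2}, c0 * x 1 + c1 * x 3 + c3 * x 4),
              ({3}, - c1 * x 2 - c2 * x 4 - c3 * x 1), ({4}, c1 * x 1 + c2 * x 3 - c3 * x 2)]"
  unfolding nat2_eq_lincomb interior_lincomb
  by (simp add: interior_list_def interior_monomial_def upt_0_5 insert_Diff_if, subst lincomb_eq_iff,
      simp add: lincomb.simps set_eq_subset algebra_simps)

lemma eval2_nat2:
  "eval2 (nat2 (c0, c1, c2, c3)) x y =
     c0 * (x 1 * y 2 - x 2 * y 1) + c1 * (x 1 * y 4 - x 4 * y 1) - c1 * (x 2 * y 3 - x 3 * y 2)
     + c2 * (x 3 * y 4 - x 4 * y 3) - c3 * (x 1 * y 3 - x 3 * y 1) - c3 * (x 2 * y 4 - x 4 * y 2)"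
  unfolding eval2_def interior_nat2 interior_lincomb
  by (simp add: interior_list_def interior_monomial_def upt_0_5 insert_Diff_if lincomb.simps
      set_eq_subset algebra_simps)

lemma eval1_ttheta: "eval1 (ttheta s p) x = -2 * p * s * x 0"
  unfolding eval1_def ttheta_eq_lincomb interior_lincomb
  by (simp add: interior_list_def interior_monomial_def upt_0_5 lincomb.simps)

lemma dnat2_dtheta: "dnat2 s K (0, 0, 0, 1) = fzero"
  unfolding dnat2_eq_lincomb fzero_eq_lincomb_Nil
  by (subst lincomb_eq_iff, simp add: lincomb.simps set_eq_subset)

lemma dtw_dtheta: "dtw s K p (0, 0, 0, 1) = lincomb [({1,2,3,4}, 4 * p)]"
  unfolding dtw_def dttheta_eq_sc_nat2 dnat2_dtheta fzero_eq_lincomb_Nil nat2_eq_lincomb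
    ttheta_eq_lincomb sc_lincomb wedge_lincomb fsub_lincomb
  by (simp add: wedge_list_def wedge_monomial_def, subst lincomb_eq_iff,
      simp add: lincomb.simps set_eq_subset)

lemma dtw_nat2: "dtw s K p (b0, b1, b2, 0) = fzero"
  unfolding dtw_def dttheta_eq_sc_nat2 nat2_eq_lincomb ttheta_eq_lincomb dnat2_eq_lincomb
    sc_lincomb wedge_lincomb fsub_lincomb fzero_eq_lincomb_Nil
  by (simp add: wedge_list_def wedge_monomial_def, subst lincomb_eq_iff,
      simp add: lincomb.simps set_eq_subset)

section \<open>Natural SU(2)-structures with \<open>\<omega>\<^sub>1 = d\<theta>\<close>\<close>

lemma interior_dtheta_eq_iff:
  "interior x (nat2 (0, 0, 0, 1)) = interior y (nat2 (b0, b1, b2, 0)) \<longleftrightarrow>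
     x 1 = b1 * y 2 + b2 * y 4 \<and> x 2 = - b1 * y 1 - b2 * y 3 \<and>
     x 3 = - b0 * y 2 - b1 * y 4 \<and> x 4 = b0 * y 1 + b1 * y 3"
  unfolding interior_nat2
  by (subst lincomb_eq_iff, simp add: lincomb.simps set_eq_subset, auto simp: algebra_simps)

lemma su2_positivity_iff_binary_form:
  "(\<forall>x y. interior x (nat2 (0, 0, 0, 1)) = interior y (nat2 (b0, b1, b2, 0)) \<longrightarrow>
      0 \<le> eval2 (nat2 (c0, c1, c2, 0)) x y) \<longleftrightarrow>
   (\<forall>p q. 0 \<le> (c0 * b1 - c1 * b0) * p\<^sup>2 + (c0 * b2 - c2 * b0) * p * q + (c1 * b2 - c2 * b1) * q\<^sup>2)"
  (is "?positive \<longleftrightarrow> (\<forall>p q. 0 \<le> ?Q p q)")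
proof
  have eval: "eval2 (nat2 (c0, c1, c2, 0)) x y = ?Q (y 1) (y 3) + ?Q (y 2) (y 4)"
    if "interior x (nat2 (0, 0, 0, 1)) = interior y (nat2 (b0, b1, b2, 0))" for x y
  proof -
    have x: "x 1 = b1 * y 2 + b2 * y 4" "x 2 = - b1 * y 1 - b2 * y 3"
      "x 3 = - b0 * y 2 - b1 * y 4" "x 4 = b0 * y 1 + b1 * y 3"
      using that unfolding interior_dtheta_eq_iff by auto
    show ?thesis
      unfolding eval2_nat2 x by (simp add: power2_eq_square algebra_simps)
  qed
  show "?positive" if "\<forall>p q. 0 \<le> ?Q p q"
    using that eval by simp
  show "\<forall>p q. 0 \<le> ?Q p q" if ?positive
  proof (intro allI)
    fix p q :: real
    define y :: tvec where "y i = (if i = 1 then p else if i = 3 then q else 0)" for i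
    define x :: tvec where
      "x i = (if i = 2 then - b1 * p - b2 * q else if i = 4 then b0 * p + b1 * q else 0)" for i
    have related: "interior x (nat2 (0, 0, 0, 1)) = interior y (nat2 (b0, b1, b2, 0))"
      unfolding interior_dtheta_eq_iff by (simp add: x_def y_def)
    show "0 \<le> ?Q p q"
      using that[rule_format, OF related] eval[OF related] by (simp add: y_def)
  qed
qed

lemma nat_su2_dtheta_iff:
  assumes "s \<noteq> 0"
  shows "nat_su2 s 1 (0, 0, 0, 1) (b0, b1, b2, b3) (c0, c1, c2, c3) \<longleftrightarrow>
    b3 = 0 \<and> c3 = 0 \<and> b1\<^sup>2 - b0 * b2 = 1 \<and> c1\<^sup>2 - c0 * c2 = 1 \<and>
    b0 * c2 + b2 * c0 - 2 * b1 * c1 = 0 \<and> 0 < c0 * b1 - c1 * b0"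
proof -
  have half: "sc (1/2) (lincomb [({1,2,3,4}, u)]) = lincomb [({1,2,3,4}, u / 2)]" for u
    by (simp add: sc_lincomb)
  have "nat_su2 s 1 (0, 0, 0, 1) (b0, b1, b2, b3) (c0, c1, c2, c3) \<longleftrightarrow>
    b3 = 0 \<and> c3 = 0 \<and> b1\<^sup>2 - b0 * b2 = 1 \<and> c1\<^sup>2 - c0 * c2 = 1 \<and> b0 * c2 + b2 * c0 - 2 * b1 * c1 = 0 \<and>
    (\<forall>x y. interior x (nat2 (0, 0, 0, 1)) = interior y (nat2 (b0, b1, b2, 0)) \<longrightarrow>
      0 \<le> eval2 (nat2 (c0, c1, c2, 0)) x y)"
    unfolding nat_su2_def su2_def wedge_nat2_nat2 wedge_ttheta_top half
      lincomb_single_eq_iff lincomb_single_eq_fzero_iff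
    using assms by (auto simp: power2_eq_square algebra_simps)
  also have "\<dots> \<longleftrightarrow> b3 = 0 \<and> c3 = 0 \<and> b1\<^sup>2 - b0 * b2 = 1 \<and> c1\<^sup>2 - c0 * c2 = 1 \<and>
    b0 * c2 + b2 * c0 - 2 * b1 * c1 = 0 \<and> 0 < c0 * b1 - c1 * b0"
  proof (cases "b1\<^sup>2 - b0 * b2 = 1 \<and> c1\<^sup>2 - c0 * c2 = 1 \<and> b0 * c2 + b2 * c0 - 2 * b1 * c1 = 0")
    case True
    have "4 * (c0 * b1 - c1 * b0) * (c1 * b2 - c2 * b1) - (c0 * b2 - c2 * b0)\<^sup>2 =
        4 * (b1\<^sup>2 - b0 * b2) * (c1\<^sup>2 - c0 * c2) - (b0 * c2 + b2 * c0 - 2 * b1 * c1)\<^sup>2"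
      by (simp add: power2_eq_square algebra_simps)
    with True have "(c0 * b2 - c2 * b0)\<^sup>2 < 4 * (c0 * b1 - c1 * b0) * (c1 * b2 - c2 * b1)"
      by simp
    then show ?thesis
      by (simp add: su2_positivity_iff_binary_form binary_form_nonneg_iff)
  qed auto
  finally show ?thesis .
qed

lemma nat_su2_dtheta_cases:
  assumes "s \<noteq> 0" and "nat_su2 s 1 (0, 0, 0, 1) b c"
  obtains b0 b1 b2 where "b = (b0, b1, b2, 0)"
proof -
  obtain b0 b1 b2 b3 c0 c1 c2 c3 where "b = (b0, b1, b2, b3)" and "c = (c0, c1, c2, c3)"
    by (metis prod.exhaust)
  with assms nat_su2_dtheta_iff[OF assms(1)] that show thesis
    by auto
qed

lemma wedge_interiors_nat2:
  "wedge (wedge (interior x (nat2 (0, 0, 0, 1))) (interior y (nat2 (b0, b1, b2, 0)))) (nat2 (c0, c1, c2, 0)) =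
    lincomb [({1,2,3,4},
      (c1 * b1 - c0 * b2) * (x 1 * y 3 + x 2 * y 4) + (c2 * b0 - c1 * b1) * (x 3 * y 1 + x 4 * y 2)
      - (c0 * b1 - c1 * b0) * (x 1 * y 1 + x 2 * y 2) - (c1 * b2 - c2 * b1) * (x 3 * y 3 + x 4 * y 4))]"
  unfolding interior_nat2 unfolding nat2_eq_lincomb wedge_lincomb
  by (simp add: wedge_list_def wedge_monomial_def, subst lincomb_eq_iff,
      simp add: lincomb.simps set_eq_subset algebra_simps)

lemma compatible_iff:
  assumes "s \<noteq> 0" and pairing: "b0 * c2 + b2 * c0 - 2 * b1 * c1 = 0"
  shows "compatible s 1 (0, 0, 0, 1) (b0, b1, b2, 0) (c0, c1, c2, 0) \<longleftrightarrow>
    c0 * b1 - c1 * b0 = 1 \<and> c1 * b2 - c2 * b1 = 1 \<and> c1 * b1 - c0 * b2 = 0"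
proof -
  let ?A = "c0 * b1 - c1 * b0" and ?C = "c1 * b2 - c2 * b1" and ?D = "c1 * b1 - c0 * b2"
  have D: "c2 * b0 - c1 * b1 = ?D"
    using pairing by (simp add: algebra_simps)
  have metric: "sc (can_metric x y) (sc (1/2) (wedge (nat2 (0, 0, 0, 1)) (nat2 (0, 0, 0, 1)))) =
      lincomb [({1,2,3,4}, - (x 0 * y 0 + x 1 * y 1 + x 2 * y 2 + x 3 * y 3 + x 4 * y 4))]" for x y :: tvec
    unfolding wedge_nat2_nat2 sc_lincomb can_metric_def by (simp add: eval_nat_numeral)
  have "compatible s 1 (0, 0, 0, 1) (b0, b1, b2, 0) (c0, c1, c2, 0) \<longleftrightarrow>
      (\<forall>(x :: tvec) (y :: tvec). x 0 = 0 \<and> y 0 = 0 \<longrightarrow>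
        ?D * (x 1 * y 3 + x 2 * y 4) + ?D * (x 3 * y 1 + x 4 * y 2)
          - ?A * (x 1 * y 1 + x 2 * y 2) - ?C * (x 3 * y 3 + x 4 * y 4) =
        - (x 1 * y 1 + x 2 * y 2 + x 3 * y 3 + x 4 * y 4))"
    unfolding compatible_def eval1_ttheta wedge_interiors_nat2 metric lincomb_single_eq_iff D
    using assms(1) by auto
  also have "\<dots> \<longleftrightarrow> ?A = 1 \<and> ?C = 1 \<and> ?D = 0"
  proof
    assume isometric: "\<forall>(x :: tvec) (y :: tvec). x 0 = 0 \<and> y 0 = 0 \<longrightarrow>
        ?D * (x 1 * y 3 + x 2 * y 4) + ?D * (x 3 * y 1 + x 4 * y 2)
          - ?A * (x 1 * y 1 + x 2 * y 2) - ?C * (x 3 * y 3 + x 4 * y 4) =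
        - (x 1 * y 1 + x 2 * y 2 + x 3 * y 3 + x 4 * y 4)"
    define e :: "nat \<Rightarrow> tvec" where "e j i = (if i = j then 1 else 0)" for j i
    show "?A = 1 \<and> ?C = 1 \<and> ?D = 0"
      using isometric[rule_format, of "e 1" "e 1"] isometric[rule_format, of "e 3" "e 3"]
        isometric[rule_format, of "e 1" "e 3"]
      by (simp add: e_def)
  qed simp
  finally show ?thesis .
qed

section \<open>The nearly-hypo structures\<close>

definition nearly_hypo_omega3 :: "real \<Rightarrow> real \<Rightarrow> real \<Rightarrow> real \<Rightarrow> real \<Rightarrow> coeffs" where
  "nearly_hypo_omega3 s K b0 b1 b2 = (K * b1 / 3, (s\<^sup>2 * K * b2 - b0) / (6 * s\<^sup>2), - (b1 / (3 * s\<^sup>2)), 0)"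

lemma nearly_hypo_iff:
  assumes "s \<noteq> 0"
  shows "nearly_hypo s K 1 (0, 0, 0, 1) (b0, b1, b2, b3) c \<longleftrightarrow> c = nearly_hypo_omega3 s K b0 b1 b2"
proof -
  obtain c0 c1 c2 c3 where c: "c = (c0, c1, c2, c3)"
    by (cases c) auto
  have omega1_equation: "dtw s K 1 (0, 0, 0, 1) = sc (-2) (wedge (nat2 (0, 0, 0, 1)) (nat2 (0, 0, 0, 1)))"
    unfolding dtw_dtheta wedge_nat2_nat2 sc_lincomb by simp
  let ?lhs = "dnat2 s K (b0, b1, b2, b3)" and ?rhs = "sc 3 (wedge (ttheta s 1) (nat2 c))"
  have "?lhs = ?rhs \<longleftrightarrow> c = nearly_hypo_omega3 s K b0 b1 b2"
  proof
    assume eq: "?lhs = ?rhs"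
    have "?lhs I = ?rhs I" for I
      using eq by simp
    from this[of "{0,1,2}"] this[of "{0,1,4}"] this[of "{0,3,4}"] this[of "{0,1,3}"]
    have "- 2 * K * b1 * s = - 6 * s * c0" "s * (b0 / s\<^sup>2 - b2 * K) = - 6 * s * c1"
      "2 * b1 * s / s\<^sup>2 = - 6 * s * c2" "0 = 6 * s * c3"
      unfolding c dnat2_eq_lincomb wedge_ttheta_nat2 sc_lincomb by (simp_all add: lincomb.simps set_eq_subset)
    then have "s * (K * b1 - 3 * c0) = 0" "s * (b0 / s\<^sup>2 - b2 * K + 6 * c1) = 0"
      "s * (2 * b1 / s\<^sup>2 + 6 * c2) = 0" "s * c3 = 0"
      by (simp_all add: algebra_simps)
    then have "K * b1 - 3 * c0 = 0" "b0 / s\<^sup>2 - b2 * K + 6 * c1 = 0"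
      "2 * b1 / s\<^sup>2 + 6 * c2 = 0" "c3 = 0"
      using assms by simp_all
    then have "c0 = K * b1 / 3" "c1 = (s\<^sup>2 * K * b2 - b0) / (6 * s\<^sup>2)" "c2 = - (b1 / (3 * s\<^sup>2))" "c3 = 0"
      using assms by (simp_all add: field_simps)
    then show "c = nearly_hypo_omega3 s K b0 b1 b2"
      by (simp add: c nearly_hypo_omega3_def)
  next
    assume "c = nearly_hypo_omega3 s K b0 b1 b2"
    then show "?lhs = ?rhs"
      unfolding \<open>c = nearly_hypo_omega3 s K b0 b1 b2\<close> nearly_hypo_omega3_def dnat2_eq_lincomb
        wedge_ttheta_nat2 sc_lincomb
      using assms by (subst lincomb_eq_iff,
          simp add: lincomb.simps set_eq_subset field_simps power2_eq_square)
  qed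
  then show ?thesis
    unfolding nearly_hypo_def omega1_equation by simp
qed

lemma nearly_hypo_omega3_identities:
  assumes "s \<noteq> 0" and "nearly_hypo_omega3 s K b0 b1 b2 = (c0, c1, c2, c3)"
  shows "c3 = 0"
    and "b0 * c2 + b2 * c0 - 2 * b1 * c1 = 0"
    and "36 * s ^ 4 * (c1\<^sup>2 - c0 * c2) = (s\<^sup>2 * K * b2 - b0)\<^sup>2 + 4 * s\<^sup>2 * K * b1\<^sup>2"
    and "6 * s\<^sup>2 * (c0 * b1 - c1 * b0) = s\<^sup>2 * K * (2 * b1\<^sup>2 - b0 * b2) + b0\<^sup>2"
    and "6 * s\<^sup>2 * (c1 * b2 - c2 * b1) = s\<^sup>2 * K * b2\<^sup>2 - b0 * b2 + 2 * b1\<^sup>2"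
    and "6 * s\<^sup>2 * (c1 * b1 - c0 * b2) = - b1 * (s\<^sup>2 * K * b2 + b0)"
proof -
  have c: "c0 = K * b1 / 3" "c1 = (s\<^sup>2 * K * b2 - b0) / (6 * s\<^sup>2)" "c2 = - (b1 / (3 * s\<^sup>2))" "c3 = 0"
    using assms(2) by (auto simp: nearly_hypo_omega3_def)
  show "c3 = 0"
    by (fact c(4))
  show "b0 * c2 + b2 * c0 - 2 * b1 * c1 = 0"
    "36 * s ^ 4 * (c1\<^sup>2 - c0 * c2) = (s\<^sup>2 * K * b2 - b0)\<^sup>2 + 4 * s\<^sup>2 * K * b1\<^sup>2"
    "6 * s\<^sup>2 * (c0 * b1 - c1 * b0) = s\<^sup>2 * K * (2 * b1\<^sup>2 - b0 * b2) + b0\<^sup>2"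
    "6 * s\<^sup>2 * (c1 * b2 - c2 * b1) = s\<^sup>2 * K * b2\<^sup>2 - b0 * b2 + 2 * b1\<^sup>2"
    "6 * s\<^sup>2 * (c1 * b1 - c0 * b2) = - b1 * (s\<^sup>2 * K * b2 + b0)"
    using assms(1) unfolding c by (simp_all add: field_simps power2_eq_square eval_nat_numeral)
qed

lemma nat_su2_nearly_hypo_omega3_iff:
  assumes "s \<noteq> 0"
  shows "nat_su2 s 1 (0, 0, 0, 1) (b0, b1, b2, 0) (nearly_hypo_omega3 s K b0 b1 b2) \<longleftrightarrow>
    b1\<^sup>2 - b0 * b2 = 1 \<and> (b0 + s\<^sup>2 * K * b2)\<^sup>2 + 4 * s\<^sup>2 * K = 36 * s ^ 4 \<and>
    - (b0\<^sup>2 / (s\<^sup>2 * (1 + b1\<^sup>2))) < K"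
proof -
  obtain c0 c1 c2 c3 where c: "nearly_hypo_omega3 s K b0 b1 b2 = (c0, c1, c2, c3)"
    by (metis prod.exhaust)
  note identities = nearly_hypo_omega3_identities[OF assms c]
  have s2: "0 < s\<^sup>2" "0 < s\<^sup>2 * (1 + b1\<^sup>2)"
    using assms by (simp_all add: add_pos_nonneg)
  have "c1\<^sup>2 - c0 * c2 = 1 \<longleftrightarrow> (b0 + s\<^sup>2 * K * b2)\<^sup>2 + 4 * s\<^sup>2 * K = 36 * s ^ 4"
    and "0 < c0 * b1 - c1 * b0 \<longleftrightarrow> - (b0\<^sup>2 / (s\<^sup>2 * (1 + b1\<^sup>2))) < K"
    if H1: "b1\<^sup>2 - b0 * b2 = 1"
  proof -
    have b1_sq: "b1\<^sup>2 = 1 + b0 * b2"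
      using H1 by simp
    have "36 * s ^ 4 * (c1\<^sup>2 - c0 * c2) = (b0 + s\<^sup>2 * K * b2)\<^sup>2 + 4 * s\<^sup>2 * K"
      using identities(3) unfolding b1_sq by (simp add: power2_eq_square algebra_simps)
    moreover have "36 * s ^ 4 \<noteq> 0"
      using assms by simp
    ultimately show "c1\<^sup>2 - c0 * c2 = 1 \<longleftrightarrow> (b0 + s\<^sup>2 * K * b2)\<^sup>2 + 4 * s\<^sup>2 * K = 36 * s ^ 4"
      by (metis mult.right_neutral mult_left_cancel)
    have scaled: "6 * s\<^sup>2 * (c0 * b1 - c1 * b0) = K * (s\<^sup>2 * (1 + b1\<^sup>2)) + b0\<^sup>2"
      using identities(4) H1 by (simp add: algebra_simps)
    have "0 < c0 * b1 - c1 * b0 \<longleftrightarrow> 0 < 6 * s\<^sup>2 * (c0 * b1 - c1 * b0)"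
      using s2(1) by (simp add: zero_less_mult_iff)
    also have "\<dots> \<longleftrightarrow> 0 < K * (s\<^sup>2 * (1 + b1\<^sup>2)) + b0\<^sup>2"
      unfolding scaled ..
    also have "\<dots> \<longleftrightarrow> - b0\<^sup>2 < K * (s\<^sup>2 * (1 + b1\<^sup>2))"
      by auto
    also have "\<dots> \<longleftrightarrow> - (b0\<^sup>2 / (s\<^sup>2 * (1 + b1\<^sup>2))) < K"
      using pos_divide_less_eq[OF s2(2), of "- b0\<^sup>2" K] by simp
    finally show "0 < c0 * b1 - c1 * b0 \<longleftrightarrow> - (b0\<^sup>2 / (s\<^sup>2 * (1 + b1\<^sup>2))) < K" .
  qed
  then show ?thesis
    unfolding c nat_su2_dtheta_iff[OF assms] using identities(1,2) by auto
qed

lemma compatibility_equations_b1_zero: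
  fixes s K b0 b2 :: real
  assumes "s \<noteq> 0" and H1: "- b0 * b2 = 1"
    and E1: "s\<^sup>2 * K + b0\<^sup>2 = 6 * s\<^sup>2" and E2: "s\<^sup>2 * K * b2\<^sup>2 + 1 = 6 * s\<^sup>2"
  shows "b2 = - b0 \<and> (b0 = 1 \<or> b0 = -1) \<and> s\<^sup>2 * K + 1 = 6 * s\<^sup>2"
proof -
  have "b0\<^sup>2 * (s\<^sup>2 * K * b2\<^sup>2 + 1) = s\<^sup>2 * K * (b0 * b2)\<^sup>2 + b0\<^sup>2"
    by (simp add: power2_eq_square algebra_simps)
  then have "b0\<^sup>2 * (6 * s\<^sup>2) = 6 * s\<^sup>2"
    using E1 E2 H1 by simp
  then have "b0\<^sup>2 = 1"
    using assms(1) by simp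
  then have "b0 = 1 \<or> b0 = -1"
    by (simp add: power2_eq_1_iff)
  with H1 E1 show ?thesis
    by auto
qed

lemma compatibility_equations_b1_nonzero:
  fixes s K b0 b1 b2 :: real
  assumes "s \<noteq> 0" and H1: "b1\<^sup>2 - b0 * b2 = 1"
    and H2: "(b0 + s\<^sup>2 * K * b2)\<^sup>2 + 4 * s\<^sup>2 * K = 36 * s ^ 4"
    and E1: "s\<^sup>2 * K * (b1\<^sup>2 + 1) + b0\<^sup>2 = 6 * s\<^sup>2" and b0: "s\<^sup>2 * K * b2 = - b0"
  shows "b2 = - b0 \<and> b0\<^sup>2 + b1\<^sup>2 = 1 \<and> K = 3 \<and> 1 / s\<^sup>2 = 3"
proof -
  have s2: "0 < s\<^sup>2"
    using assms(1) by simp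
  have b1_sq: "b1\<^sup>2 = 1 + b0 * b2"
    using H1 by simp
  have "s\<^sup>2 * K * b1\<^sup>2 = s\<^sup>2 * K + b0 * (s\<^sup>2 * K * b2)"
    unfolding b1_sq by (simp add: algebra_simps)
  also have "\<dots> = s\<^sup>2 * K - b0\<^sup>2"
    unfolding b0 by (simp add: power2_eq_square)
  finally have "s\<^sup>2 * K * b1\<^sup>2 = s\<^sup>2 * K - b0\<^sup>2" .
  moreover have "s\<^sup>2 * K * (b1\<^sup>2 + 1) = s\<^sup>2 * K * b1\<^sup>2 + s\<^sup>2 * K"
    by (simp add: algebra_simps)
  ultimately have "2 * (s\<^sup>2 * K) = 6 * s\<^sup>2"
    using E1 by linarith
  then have K: "K = 3"
    using s2 by simp
  have "4 * s\<^sup>2 * K = 36 * s ^ 4"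
    using H2 b0 by simp
  then have "12 * s\<^sup>2 = 36 * s\<^sup>2 * s\<^sup>2"
    unfolding K by (simp add: power2_eq_square eval_nat_numeral)
  then have s2_val: "s\<^sup>2 = 1 / 3"
    using s2 by simp
  then have "b2 = - b0"
    using b0 K by simp
  moreover from this have "b0\<^sup>2 + b1\<^sup>2 = 1"
    using H1 by (simp add: power2_eq_square)
  ultimately show ?thesis
    unfolding s2_val using K by simp
qed

lemma compatibility_equations_iff:
  fixes s K b0 b1 b2 :: real
  assumes "s \<noteq> 0" and H1: "b1\<^sup>2 - b0 * b2 = 1"
    and H2: "(b0 + s\<^sup>2 * K * b2)\<^sup>2 + 4 * s\<^sup>2 * K = 36 * s ^ 4"
  shows "s\<^sup>2 * K * (b1\<^sup>2 + 1) + b0\<^sup>2 = 6 * s\<^sup>2 \<and> s\<^sup>2 * K * b2\<^sup>2 + b1\<^sup>2 + 1 = 6 * s\<^sup>2 \<and>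
      b1 * (s\<^sup>2 * K * b2 + b0) = 0 \<longleftrightarrow>
    (b2 = - b0 \<and> b1 \<noteq> 0 \<and> b0\<^sup>2 + b1\<^sup>2 = 1 \<and> K = 3 \<and> 1 / s\<^sup>2 = 3) \<or>
    (b2 = - b0 \<and> (b0 = 1 \<or> b0 = -1) \<and> b1 = 0 \<and> s\<^sup>2 * K + 1 = 6 * s\<^sup>2)"
proof
  assume "s\<^sup>2 * K * (b1\<^sup>2 + 1) + b0\<^sup>2 = 6 * s\<^sup>2 \<and> s\<^sup>2 * K * b2\<^sup>2 + b1\<^sup>2 + 1 = 6 * s\<^sup>2 \<and>
      b1 * (s\<^sup>2 * K * b2 + b0) = 0"
  then show "(b2 = - b0 \<and> b1 \<noteq> 0 \<and> b0\<^sup>2 + b1\<^sup>2 = 1 \<and> K = 3 \<and> 1 / s\<^sup>2 = 3) \<or>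
    (b2 = - b0 \<and> (b0 = 1 \<or> b0 = -1) \<and> b1 = 0 \<and> s\<^sup>2 * K + 1 = 6 * s\<^sup>2)"
    using compatibility_equations_b1_zero[OF assms(1), of b0 b2 K]
      compatibility_equations_b1_nonzero[OF assms]
    by (cases "b1 = 0") (use H1 in simp_all)
next
  assume "(b2 = - b0 \<and> b1 \<noteq> 0 \<and> b0\<^sup>2 + b1\<^sup>2 = 1 \<and> K = 3 \<and> 1 / s\<^sup>2 = 3) \<or>
    (b2 = - b0 \<and> (b0 = 1 \<or> b0 = -1) \<and> b1 = 0 \<and> s\<^sup>2 * K + 1 = 6 * s\<^sup>2)"
  then show "s\<^sup>2 * K * (b1\<^sup>2 + 1) + b0\<^sup>2 = 6 * s\<^sup>2 \<and> s\<^sup>2 * K * b2\<^sup>2 + b1\<^sup>2 + 1 = 6 * s\<^sup>2 \<and>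
      b1 * (s\<^sup>2 * K * b2 + b0) = 0"
  proof
    assume case_i: "b2 = - b0 \<and> b1 \<noteq> 0 \<and> b0\<^sup>2 + b1\<^sup>2 = 1 \<and> K = 3 \<and> 1 / s\<^sup>2 = 3"
    then have "s\<^sup>2 = 1 / 3"
      using assms(1) by (simp add: field_simps)
    with case_i show ?thesis
      by (simp add: power2_eq_square algebra_simps)
  qed auto
qed

lemma compatible_nearly_hypo_omega3_iff:
  assumes "s \<noteq> 0" and H1: "b1\<^sup>2 - b0 * b2 = 1"
    and H2: "(b0 + s\<^sup>2 * K * b2)\<^sup>2 + 4 * s\<^sup>2 * K = 36 * s ^ 4"
  shows "compatible s 1 (0, 0, 0, 1) (b0, b1, b2, 0) (nearly_hypo_omega3 s K b0 b1 b2) \<longleftrightarrow>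
    (b2 = - b0 \<and> b1 \<noteq> 0 \<and> b0\<^sup>2 + b1\<^sup>2 = 1 \<and> K = 3 \<and> 1 / s\<^sup>2 = 3) \<or>
    (b2 = - b0 \<and> (b0 = 1 \<or> b0 = -1) \<and> b1 = 0 \<and> s\<^sup>2 * K + 1 = 6 * s\<^sup>2)"
proof -
  obtain c0 c1 c2 c3 where c: "nearly_hypo_omega3 s K b0 b1 b2 = (c0, c1, c2, c3)"
    by (metis prod.exhaust)
  note identities = nearly_hypo_omega3_identities[OF assms(1) c]
  have b0b2: "b0 * b2 = b1\<^sup>2 - 1"
    using H1 by simp
  have scale: "x = y \<longleftrightarrow> 6 * s\<^sup>2 * x = 6 * s\<^sup>2 * y" for x y :: real
    using assms(1) by simp
  have "6 * s\<^sup>2 * (c0 * b1 - c1 * b0) = s\<^sup>2 * K * (b1\<^sup>2 + 1) + b0\<^sup>2"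
    "6 * s\<^sup>2 * (c1 * b2 - c2 * b1) = s\<^sup>2 * K * b2\<^sup>2 + b1\<^sup>2 + 1"
    using identities(4,5) unfolding b0b2 by (simp_all add: algebra_simps)
  then have "c0 * b1 - c1 * b0 = 1 \<longleftrightarrow> s\<^sup>2 * K * (b1\<^sup>2 + 1) + b0\<^sup>2 = 6 * s\<^sup>2"
    "c1 * b2 - c2 * b1 = 1 \<longleftrightarrow> s\<^sup>2 * K * b2\<^sup>2 + b1\<^sup>2 + 1 = 6 * s\<^sup>2"
    "c1 * b1 - c0 * b2 = 0 \<longleftrightarrow> b1 * (s\<^sup>2 * K * b2 + b0) = 0"
    using identities(6) scale[of "c0 * b1 - c1 * b0" 1] scale[of "c1 * b2 - c2 * b1" 1]
      scale[of "c1 * b1 - c0 * b2" 0] by simp_all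
  then show ?thesis
    unfolding c identities(1) compatible_iff[OF assms(1) identities(2)]
    using compatibility_equations_iff[OF assms] by simp
qed

lemma nearly_hypo_imp_contact_hypo_double_hypo:
  assumes "s \<noteq> 0" and "nearly_hypo s K 1 (0, 0, 0, 1) (b0, b1, b2, 0) c"
  shows "contact_hypo s K 1 (0, 0, 0, 1) (b0, b1, b2, 0) c \<and> double_hypo s K 1 (0, 0, 0, 1) (b0, b1, b2, 0) c"
proof -
  have "c = nearly_hypo_omega3 s K b0 b1 b2"
    using assms nearly_hypo_iff by blast
  then show ?thesis
    using assms(2) unfolding contact_hypo_def double_hypo_def hypo_def nearly_hypo_omega3_def
    by (simp add: dttheta_eq_sc_nat2 dtw_nat2 dnat2_dtheta)
qed

theorem mainTheorem8:
  fixes s K :: real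
  assumes "s > 0"
  shows
   "(\<forall>b c. nat_su2 s 1 (0, 0, 0, 1) b c \<longrightarrow>
       (nearly_hypo s K 1 (0, 0, 0, 1) b c \<longleftrightarrow>
         (\<exists>b0 b1 b2. b1\<^sup>2 - b0 * b2 = 1 \<and> (b0 + s\<^sup>2 * K * b2)\<^sup>2 + 4 * s\<^sup>2 * K = 36 * s ^ 4 \<and>
            K > - (b0\<^sup>2 / (s\<^sup>2 * (1 + b1\<^sup>2))) \<and>
            b = (b0, b1, b2, 0) \<and>
            c = (K * b1 / 3, (s\<^sup>2 * K * b2 - b0) / (6 * s\<^sup>2), - (b1 / (3 * s\<^sup>2)), 0)))) \<and>
    (\<forall>b0 b1 b2. b1\<^sup>2 - b0 * b2 = 1 \<and> (b0 + s\<^sup>2 * K * b2)\<^sup>2 + 4 * s\<^sup>2 * K = 36 * s ^ 4 \<and>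
            K > - (b0\<^sup>2 / (s\<^sup>2 * (1 + b1\<^sup>2))) \<longrightarrow>
       nat_su2 s 1 (0, 0, 0, 1) (b0, b1, b2, 0)
          (K * b1 / 3, (s\<^sup>2 * K * b2 - b0) / (6 * s\<^sup>2), - (b1 / (3 * s\<^sup>2)), 0)) \<and>
    (\<forall>b c. nat_su2 s 1 (0, 0, 0, 1) b c \<and> nearly_hypo s K 1 (0, 0, 0, 1) b c \<longrightarrow>
       contact_hypo s K 1 (0, 0, 0, 1) b c \<and> double_hypo s K 1 (0, 0, 0, 1) b c) \<and>
    (\<forall>b0 b1 b2. b1\<^sup>2 - b0 * b2 = 1 \<and> (b0 + s\<^sup>2 * K * b2)\<^sup>2 + 4 * s\<^sup>2 * K = 36 * s ^ 4 \<and>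
            K > - (b0\<^sup>2 / (s\<^sup>2 * (1 + b1\<^sup>2))) \<longrightarrow>
       (compatible s 1 (0, 0, 0, 1) (b0, b1, b2, 0)
          (K * b1 / 3, (s\<^sup>2 * K * b2 - b0) / (6 * s\<^sup>2), - (b1 / (3 * s\<^sup>2)), 0) \<longleftrightarrow>
        (b2 = - b0 \<and> b1 \<noteq> 0 \<and> b0\<^sup>2 + b1\<^sup>2 = 1 \<and> K = 3 \<and> 1 / s\<^sup>2 = 3) \<or>
        (b2 = - b0 \<and> (b0 = 1 \<or> b0 = -1) \<and> b1 = 0 \<and> s\<^sup>2 * K + 1 = 6 * s\<^sup>2)))"
proof -
  have s: "s \<noteq> 0"
    using assms by simp
  have nearly_hypo_characterization:
    "nearly_hypo s K 1 (0, 0, 0, 1) b c \<longleftrightarrow>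
      (\<exists>b0 b1 b2. b1\<^sup>2 - b0 * b2 = 1 \<and> (b0 + s\<^sup>2 * K * b2)\<^sup>2 + 4 * s\<^sup>2 * K = 36 * s ^ 4 \<and>
        K > - (b0\<^sup>2 / (s\<^sup>2 * (1 + b1\<^sup>2))) \<and> b = (b0, b1, b2, 0) \<and> c = nearly_hypo_omega3 s K b0 b1 b2)"
    if su2: "nat_su2 s 1 (0, 0, 0, 1) b c" for b c
  proof -
    obtain b0 b1 b2 where b: "b = (b0, b1, b2, 0)"
      using nat_su2_dtheta_cases[OF s su2] .
    show ?thesis
      using su2 unfolding b nearly_hypo_iff[OF s] by (auto simp: nat_su2_nearly_hypo_omega3_iff[OF s])
  qed
  have "nat_su2 s 1 (0, 0, 0, 1) b c \<and> nearly_hypo s K 1 (0, 0, 0, 1) b c \<Longrightarrow>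
      contact_hypo s K 1 (0, 0, 0, 1) b c \<and> double_hypo s K 1 (0, 0, 0, 1) b c" for b c
    by (metis nat_su2_dtheta_cases[OF s] nearly_hypo_imp_contact_hypo_double_hypo[OF s])
  then show ?thesis
    unfolding nearly_hypo_omega3_def[symmetric]
    using nearly_hypo_characterization nat_su2_nearly_hypo_omega3_iff[OF s]
      compatible_nearly_hypo_omega3_iff[OF s]
    by blast
qed

end
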